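(* Let $n\geq 8$ and let $G$ be an $n$-vertex planar graph containing no subgraph isomorphic to $S_{2,2}$. If $G$ has a vertex of degree at least $5$, then $e(G)\leq 2n-4$.
   Context: All graphs are finite and simple; $e(G)$ denotes the number of edges of $G$. The double star $S_{2,2}$ is the tree obtained from an edge $xy$ by joining $x$ to two new vertices and $y$ to two further new vertices (6 vertices in total). *)

theory Defs
  imports "HOL-Analysis.Analysis"
begin

definition simple_graph :: "'a set \<Rightarrow> 'a set set \<Rightarrow> bool" where
  "simple_graph V E \<longleftrightarrow> finite V \<and> (\<forall>e\<in>E. e \<subseteq> V \<and> card e = 2)"

definition degree :: "'a set set \<Rightarrow> 'a \<Rightarrow> nat" where
  "degree E v = card {e\<in>E. v \<in> e}"

definition planar :: "'a set \<Rightarrow> 'a set set \<Rightarrow> bool" where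
  "planar V E \<longleftrightarrow> (\<exists>(f :: 'a \<Rightarrow> complex) (g :: 'a set \<Rightarrow> real \<Rightarrow> complex).
      inj_on f V \<and>
      (\<forall>e\<in>E. arc (g e) \<and> {pathstart (g e), pathfinish (g e)} = f ` e
               \<and> path_image (g e) \<inter> f ` V = f ` e) \<and>
      (\<forall>e\<in>E. \<forall>e'\<in>E. e \<noteq> e' \<longrightarrow> path_image (g e) \<inter> path_image (g e') = f ` (e \<inter> e')))"

text \<open>G contains a (not necessarily induced) subgraph isomorphic to the double star S_{2,2}:
  centre edge xy, x adjacent to a,b and y adjacent to c,d, all six vertices distinct.\<close>
definition contains_S22 :: "'a set \<Rightarrow> 'a set set \<Rightarrow> bool" where
  "contains_S22 V E \<longleftrightarrow> (\<exists>x y a b c d.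
      {x, y, a, b, c, d} \<subseteq> V \<and> card {x, y, a, b, c, d} = 6 \<and>
      {x, y} \<in> E \<and> {x, a} \<in> E \<and> {x, b} \<in> E \<and> {y, c} \<in> E \<and> {y, d} \<in> E)"

end

theory Submission
  imports Defs
begin

text \<open>In an \<open>S\<^sub>2\<^sub>,\<^sub>2\<close>-free graph every
  neighbour of a vertex of degree at least 5 has degree at most 2. If two vertices have degree
  at least 5, let each vertex of degree at most 2, 3 or 4, and at least 5 send weight 2, 1
  and 0 along each incident edge: every edge receives at least 2, while the two big vertices
  send nothing and every other vertex sends at most 4, so \<open>2 e(G) \<le> 4 (n - 2)\<close>. If a single
  vertex \<open>v\<close> has degree \<open>d \<ge> 5\<close>, the degree sum is at most \<open>d + 2d + 4 (n - 1 - d) \<le> 4n - 9\<close>.\<close>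

definition neighbours :: "'a set set \<Rightarrow> 'a \<Rightarrow> 'a set" where
  "neighbours E x = {y. {x, y} \<in> E}"

lemma simple_graph_edgeE:
  assumes "simple_graph V E" and "e \<in> E"
  obtains a b where "e = {a, b}" and "a \<noteq> b"
  using assms by (auto simp: simple_graph_def card_2_iff)

lemma simple_graph_finite_edges:
  assumes "simple_graph V E"
  shows "finite E"
proof -
  have "E \<subseteq> Pow V" using assms by (auto simp: simple_graph_def)
  then show ?thesis using assms finite_subset by (auto simp: simple_graph_def)
qed

lemma neighbours_subset:
  assumes "simple_graph V E"
  shows "neighbours E x \<subseteq> V - {x}"
  using assms by (fastforce simp: simple_graph_def neighbours_def)

lemma card_neighbours:
  assumes "simple_graph V E"
  shows "card (neighbours E x) = degree E x"
proof -
  have "bij_betw (\<lambda>y. {x, y}) (neighbours E x) {e\<in>E. x \<in> e}"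
  proof (rule bij_betw_imageI)
    show "inj_on (\<lambda>y. {x, y}) (neighbours E x)"
      by (auto simp: inj_on_def doubleton_eq_iff)
    have "e \<in> (\<lambda>y. {x, y}) ` neighbours E x" if "e \<in> E" and "x \<in> e" for e
    proof -
      obtain a b where "e = {a, b}" using simple_graph_edgeE[OF assms \<open>e \<in> E\<close>] .
      with that show ?thesis by (auto simp: neighbours_def insert_commute)
    qed
    then show "(\<lambda>y. {x, y}) ` neighbours E x = {e\<in>E. x \<in> e}"
      by (auto simp: neighbours_def)
  qed
  then show ?thesis unfolding degree_def by (rule bij_betw_same_card)
qed

lemma two_elements_outside:
  assumes "card B + 2 \<le> card A" and "finite B"
  obtains a b where "a \<in> A - B" and "b \<in> A - B" and "a \<noteq> b"
proof -
  have "2 \<le> card (A - B)" using assms diff_card_le_card_Diff[of B A] by linarith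
  then obtain T where T: "T \<subseteq> A - B" "card T = 2" by (rule obtain_subset_with_card_n)
  then obtain a b where "T = {a, b}" "a \<noteq> b" by (meson card_2_iff)
  with T that show ?thesis by blast
qed

lemma contains_S22_if_adjacent_big_degrees:
  assumes G: "simple_graph V E" and xy: "{x, y} \<in> E"
    and deg_x: "5 \<le> degree E x" and deg_y: "3 \<le> degree E y"
  shows "contains_S22 V E"
proof -
  have Nx: "neighbours E x \<subseteq> V - {x}" and Ny: "neighbours E y \<subseteq> V - {y}"
    using neighbours_subset[OF G] by blast+
  have "card {x} + 2 \<le> card (neighbours E y)"
    using deg_y card_neighbours[OF G] by simp
  then obtain c d where cd: "c \<in> neighbours E y - {x}" "d \<in> neighbours E y - {x}" "c \<noteq> d"
    by (rule two_elements_outside) auto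
  have "card {y, c, d} \<le> 3" by (simp add: card_insert_le_m1)
  then have "card {y, c, d} + 2 \<le> card (neighbours E x)"
    using deg_x card_neighbours[OF G] by simp
  then obtain a b where ab: "a \<in> neighbours E x - {y, c, d}" "b \<in> neighbours E x - {y, c, d}" "a \<noteq> b"
    by (rule two_elements_outside) auto
  have "y \<noteq> x" using xy Nx by (auto simp: neighbours_def)
  then have "x \<noteq> y" "x \<noteq> a" "x \<noteq> b" "x \<noteq> c" "x \<noteq> d" "y \<noteq> a" "y \<noteq> b" "y \<noteq> c"
    "y \<noteq> d" "a \<noteq> b" "a \<noteq> c" "a \<noteq> d" "b \<noteq> c" "b \<noteq> d" "c \<noteq> d"
    using ab cd Nx Ny by blast+
  then have card_6: "card {x, y, a, b, c, d} = 6" by (simp add: card_insert_if)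
  have "{x, y} \<subseteq> V" using G xy by (auto simp: simple_graph_def)
  then have "{x, y, a, b, c, d} \<subseteq> V" using ab cd Nx Ny by blast
  moreover have "{x, a} \<in> E" "{x, b} \<in> E" "{y, c} \<in> E" "{y, d} \<in> E"
    using ab cd by (auto simp: neighbours_def)
  ultimately have "{x, y, a, b, c, d} \<subseteq> V \<and> card {x, y, a, b, c, d} = 6 \<and>
      {x, y} \<in> E \<and> {x, a} \<in> E \<and> {x, b} \<in> E \<and> {y, c} \<in> E \<and> {y, d} \<in> E"
    using xy card_6 by blast
  then show ?thesis unfolding contains_S22_def by (intro exI)
qed

corollary S22_free_neighbour_degree_le_2:
  assumes "simple_graph V E" and "\<not> contains_S22 V E"
    and "{x, y} \<in> E" and "5 \<le> degree E x"
  shows "degree E y \<le> 2"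
  using contains_S22_if_adjacent_big_degrees assms by fastforce

lemma sum_degree_weighted:
  assumes "simple_graph V E"
  shows "(\<Sum>x\<in>V. degree E x * w x) = (\<Sum>e\<in>E. \<Sum>x\<in>e. w x)"
proof -
  have fV: "finite V" and sub: "\<And>e. e \<in> E \<Longrightarrow> e \<subseteq> V"
    using assms by (auto simp: simple_graph_def)
  have fE: "finite E" using simple_graph_finite_edges[OF assms] .
  have "(\<Sum>x\<in>V. degree E x * w x) = (\<Sum>x\<in>V. \<Sum>e\<in>E. if x \<in> e then w x else 0)"
    using fE by (simp add: degree_def sum.inter_filter[symmetric])
  also have "\<dots> = (\<Sum>e\<in>E. \<Sum>x\<in>V. if x \<in> e then w x else 0)"
    by (rule sum.swap)
  also have "\<dots> = (\<Sum>e\<in>E. \<Sum>x\<in>e. w x)"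
  proof (rule sum.cong[OF refl])
    fix e assume "e \<in> E"
    then have "V \<inter> e = e" using sub by blast
    then show "(\<Sum>x\<in>V. if x \<in> e then w x else 0) = (\<Sum>x\<in>e. w x)"
      using fV by (simp add: sum.inter_restrict[symmetric])
  qed
  finally show ?thesis .
qed

lemma sum_degree:
  assumes "simple_graph V E"
  shows "(\<Sum>x\<in>V. degree E x) = 2 * card E"
  using sum_degree_weighted[OF assms, of "\<lambda>_. 1"] assms by (simp add: simple_graph_def)

lemma card_edges_if_two_big_degrees:
  assumes G: "simple_graph V E" and S22: "\<not> contains_S22 V E"
    and vw: "v \<in> V" "w \<in> V" "v \<noteq> w" and big: "5 \<le> degree E v" "5 \<le> degree E w"
  shows "card E \<le> 2 * card V - 4"
proof -
  define weight :: "'a \<Rightarrow> nat" where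
    "weight x = (if degree E x \<le> 2 then 2 else if degree E x \<le> 4 then 1 else 0)" for x
  have "(\<Sum>e\<in>E. 2) \<le> (\<Sum>e\<in>E. \<Sum>x\<in>e. weight x)"
  proof (rule sum_mono)
    fix e assume "e \<in> E"
    then obtain a b where e: "e = {a, b}" "a \<noteq> b" using simple_graph_edgeE[OF G] by blast
    with \<open>e \<in> E\<close> have "{a, b} \<in> E" "{b, a} \<in> E" by (simp_all add: insert_commute)
    then have "5 \<le> degree E a \<Longrightarrow> degree E b \<le> 2" "5 \<le> degree E b \<Longrightarrow> degree E a \<le> 2"
      using S22_free_neighbour_degree_le_2[OF G S22] by blast+
    then show "2 \<le> (\<Sum>x\<in>e. weight x)" using e by (auto simp: weight_def)
  qed
  also have "\<dots> = (\<Sum>x\<in>V. degree E x * weight x)"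
    using sum_degree_weighted[OF G] by simp
  also have "\<dots> = (\<Sum>x\<in>V - {v, w}. degree E x * weight x)"
    using G vw big by (intro sum.mono_neutral_right) (auto simp: simple_graph_def weight_def)
  also have "\<dots> \<le> (\<Sum>x\<in>V - {v, w}. 4)"
    by (intro sum_mono) (auto simp: weight_def)
  also have "\<dots> = 4 * (card V - 2)"
    using G vw by (simp add: simple_graph_def card_Diff_subset)
  finally show ?thesis by simp
qed

lemma card_edges_if_one_big_degree:
  assumes G: "simple_graph V E" and S22: "\<not> contains_S22 V E"
    and "v \<in> V" and big: "5 \<le> degree E v"
    and small: "\<And>x. x \<in> V \<Longrightarrow> x \<noteq> v \<Longrightarrow> degree E x \<le> 4"
  shows "card E + 5 \<le> 2 * card V"
proof -
  define N where "N = neighbours E v"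
  define R where "R = V - {v} - N"
  have fV: "finite V" using G by (simp add: simple_graph_def)
  have N: "N \<subseteq> V - {v}" unfolding N_def by (rule neighbours_subset[OF G])
  have card_N: "card N = degree E v" unfolding N_def by (rule card_neighbours[OF G])
  have V: "V = insert v (N \<union> R)" and disj: "v \<notin> N \<union> R" "N \<inter> R = {}"
    using \<open>v \<in> V\<close> N by (auto simp: R_def)
  have fNR: "finite N" "finite R" using fV V by (metis finite_Un finite_insert)+
  have card_R: "card R = card V - 1 - degree E v"
    using fV fNR V disj card_N by (simp add: card_Un_disjoint)
  have "2 * card E = degree E v + (\<Sum>x\<in>N. degree E x) + (\<Sum>x\<in>R. degree E x)"
    using sum_degree[OF G] V disj fNR by (simp add: sum.union_disjoint)
  also have "\<dots> \<le> degree E v + (\<Sum>x\<in>N. 2) + (\<Sum>x\<in>R. 4)"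
    using S22_free_neighbour_degree_le_2[OF G S22 _ big] small N
    by (intro add_mono sum_mono order.refl) (auto simp: N_def R_def neighbours_def)
  also have "\<dots> = 3 * degree E v + 4 * (card V - 1 - degree E v)"
    using card_N card_R by simp
  finally have "2 * card E \<le> 3 * degree E v + 4 * (card V - 1 - degree E v)" .
  moreover have "degree E v + 1 \<le> card V"
    using fV V disj card_N by (simp add: card_Un_disjoint)
  ultimately show ?thesis using big by linarith
qed

theorem lemma2p2:
  fixes V :: "'a set" and E :: "'a set set"
  assumes "simple_graph V E"
    and "card V \<ge> 8"
    and "planar V E"
    and "\<not> contains_S22 V E"
    and "\<exists>v\<in>V. degree E v \<ge> 5"
  shows "card E \<le> 2 * card V - 4"
proof -
  obtain v where "v \<in> V" and "5 \<le> degree E v" using assms(5) by blast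
  show ?thesis
  proof (cases "\<exists>w\<in>V. w \<noteq> v \<and> 5 \<le> degree E w")
    case True
    then show ?thesis
      using card_edges_if_two_big_degrees[OF assms(1,4) \<open>v \<in> V\<close>] \<open>5 \<le> degree E v\<close> by blast
  next
    case False
    then have "card E + 5 \<le> 2 * card V"
      using card_edges_if_one_big_degree[OF assms(1,4) \<open>v \<in> V\<close> \<open>5 \<le> degree E v\<close>] by force
    then show ?thesis by linarith
  qed
qed

end
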